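(* Let $V$ be a vertex operator algebra, $W_1,W_2,W_3$ weak $V$-modules and ${\mathcal Y}$ a quasi-intertwining operator of type $\binom{W_3}{W_1\,W_2}$. Then ${\mathcal Y}(w_{(1)},x)\in\mathcal H(W_2,W_3)$ for every $w_{(1)}\in W_1$, and the linear map $\psi_x:W_1\to\mathcal H(W_2,W_3)$, $\psi_x(w_{(1)})={\mathcal Y}(w_{(1)},x)$, is a $g(V)_{\ge0}$-homomorphism: $\psi_x(v_nw_{(1)})=v_n\psi_x(w_{(1)})$ for all $v\in V$, $n\ge0$, $w_{(1)}\in W_1$, where $v_n$ acts on $\mathcal H(W_2,W_3)$ via $Y_{\mathcal H}$.
   Context: A weak $V$-module is a module for $V$ regarded as a vertex algebra; $L(-1)=\omega_0$. A quasi-intertwining operator of type $\binom{W_3}{W_1\,W_2}$ is a linear map $W_1\otimes W_2\to W_3\{x\}$, $w_{(1)}\otimes w_{(2)}\mapsto{\mathcal Y}(w_{(1)},x)w_{(2)}=\sum_{n\in\mathbb C}(w_{(1)})_nw_{(2)}x^{-n-1}$, with $(w_{(1)})_nw_{(2)}=0$ for $\mathrm{Re}\,n\gg0$, the commutator formula $Y_3(v,x_1){\mathcal Y}(w_{(1)},x_2)w_{(2)}-{\mathcal Y}(w_{(1)},x_2)Y_2(v,x_1)w_{(2)}=\mathrm{Res}_{x_0}x_2^{-1}\delta(\frac{x_1-x_0}{x_2}){\mathcal Y}(Y_1(v,x_0)w_{(1)},x_2)w_{(2)}$, and $\frac{d}{dx}{\mathcal Y}(w_{(1)},x)={\mathcal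 Y}(L(-1)w_{(1)},x)$. $\mathcal H(W_2,W_3)$ is the space of $\phi(x)\in(\mathrm{Hom}(W_2,W_3))\{x\}$ such that: for each $w_{(2)}$, writing $\phi(x)w_{(2)}=\sum_{n\in\mathbb C}w^{(n)}x^{-n-1}$, $w^{(n)}=0$ for $\mathrm{Re}\,n\gg0$; $[L(-1),\phi(x)]=\frac{d}{dx}\phi(x)$; and for each $v\in V$ there is $k\ge0$ with $(x_1-x_2)^k(Y_3(v,x_1)\phi(x_2)-\phi(x_2)Y_2(v,x_1))=0$. The map $Y_{\mathcal H}(v,x_0)\phi(x)=\mathrm{Res}_{x_1}\big(x_0^{-1}\delta(\frac{x_1-x}{x_0})Y_3(v,x_1)\phi(x)-x_0^{-1}\delta(\frac{x-x_1}{-x_0})\phi(x)Y_2(v,x_1)\big)=\sum_nv_n\phi(x)x_0^{-n-1}$ makes $\mathcal H(W_2,W_3)$ a weak $V$-module; for $n\ge0$, $v_n\phi(x)=\mathrm{Res}_{x_1}(x_1-x)^n[Y_3(v,x_1)\phi(x)-\phi(x)Y_2(v,x_1)]$. *)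

theory Defs
  imports Complex_Main "HOL-Library.Groups_Big_Fun"
begin

class complex_vector = ab_group_add +
  fixes scaleC :: "complex \<Rightarrow> 'a \<Rightarrow> 'a"  (infixr \<open>*\<^sub>C\<close> 75)
  assumes scaleC_add_right: "a *\<^sub>C (x + y) = a *\<^sub>C x + a *\<^sub>C y"
    and scaleC_add_left: "(a + b) *\<^sub>C x = a *\<^sub>C x + b *\<^sub>C x"
    and scaleC_scaleC: "a *\<^sub>C (b *\<^sub>C x) = (a * b) *\<^sub>C x"
    and scaleC_one: "1 *\<^sub>C x = x"

text \<open>A vertex operator Y(v,x) = sum_n v_n x^(-n-1) is encoded by its modes:
  Y v n u = v_n u (n :: int).  A formal series with complex exponents
  sum_{n in C} a_n x^(-n-1) is encoded by its coefficient function n :: complex => a_n.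
  Finite sums over i >= 0 (finite because of truncation) are written with Sum_any.\<close>

definition clin :: "('a::complex_vector \<Rightarrow> 'b::complex_vector) \<Rightarrow> bool" where
  "clin f \<longleftrightarrow> (\<forall>x y. f (x + y) = f x + f y) \<and> (\<forall>c x. f (c *\<^sub>C x) = c *\<^sub>C f x)"

text \<open>Component form of the Jacobi identity for a representation YW of (V,Y):
  the coefficient of x0^(-l-1) x1^(-m-1) x2^(-n-1) of
  x0^-1 delta((x1-x2)/x0) YW(u,x1)YW(v,x2) - x0^-1 delta((x2-x1)/(-x0)) YW(v,x2)YW(u,x1)
   = x2^-1 delta((x1-x0)/x2) YW(Y(u,x0)v,x2).\<close>
definition jacobi ::
  "('v::complex_vector \<Rightarrow> int \<Rightarrow> 'v \<Rightarrow> 'v) \<Rightarrow> ('v \<Rightarrow> int \<Rightarrow> 'w::complex_vector \<Rightarrow> 'w) \<Rightarrow> bool" where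
  "jacobi Y YW \<longleftrightarrow> (\<forall>u v w l m n.
     Sum_any (\<lambda>i::nat. ((-1)^i * (of_int l gchoose i)) *\<^sub>C
        (YW u (l + m - int i) (YW v (n + int i) w)
         - (-1)^(nat \<bar>l\<bar>) *\<^sub>C YW v (l + n - int i) (YW u (m + int i) w)))
     = Sum_any (\<lambda>i::nat. (of_int m gchoose i) *\<^sub>C YW (Y u (l + int i) v) (m + n - int i) w))"

definition Lop :: "('v \<Rightarrow> int \<Rightarrow> 'w \<Rightarrow> 'w) \<Rightarrow> 'v \<Rightarrow> int \<Rightarrow> 'w \<Rightarrow> 'w" where
  "Lop YW om n = YW om (n + 1)"

definition wt_space :: "('v::complex_vector \<Rightarrow> int \<Rightarrow> 'v \<Rightarrow> 'v) \<Rightarrow> 'v \<Rightarrow> int \<Rightarrow> 'v set" where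
  "wt_space Y om n = {v. Lop Y om 0 v = of_int n *\<^sub>C v}"

definition is_VOA ::
  "('v::complex_vector \<Rightarrow> int \<Rightarrow> 'v \<Rightarrow> 'v) \<Rightarrow> 'v \<Rightarrow> 'v \<Rightarrow> complex \<Rightarrow> bool" where
  "is_VOA Y vac om c \<longleftrightarrow>
     \<comment> \<open>grading V = direct sum of V_(n), V_(n) the L(0)-eigenspaces\<close>
     (\<forall>v. \<exists>N f. finite N \<and> (\<forall>n\<in>N. f n \<in> wt_space Y om n) \<and> v = (\<Sum>n\<in>N. f n)) \<and>
     (\<forall>n. \<exists>B. finite B \<and> B \<subseteq> wt_space Y om n \<and>
            (\<forall>v\<in>wt_space Y om n. \<exists>a. v = (\<Sum>b\<in>B. a b *\<^sub>C b))) \<and>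
     (\<exists>N. \<forall>n<N. wt_space Y om n = {0}) \<and>
     \<comment> \<open>linearity\<close>
     (\<forall>u n. clin (Y u n)) \<and> (\<forall>n v. clin (\<lambda>u. Y u n v)) \<and>
     \<comment> \<open>truncation\<close>
     (\<forall>u v. \<exists>N. \<forall>n\<ge>N. Y u n v = 0) \<and>
     \<comment> \<open>vacuum and creation properties\<close>
     (\<forall>n v. Y vac n v = (if n = -1 then v else 0)) \<and>
     (\<forall>v n. n \<ge> 0 \<longrightarrow> Y v n vac = 0) \<and> (\<forall>v. Y v (-1) vac = v) \<and>
     \<comment> \<open>Jacobi identity\<close>
     jacobi Y Y \<and>
     \<comment> \<open>Virasoro relations\<close>
     (\<forall>m n v. Lop Y om m (Lop Y om n v) - Lop Y om n (Lop Y om m v)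
        = of_int (m - n) *\<^sub>C Lop Y om (m + n) v
          + (if m + n = 0 then ((of_int m ^ 3 - of_int m) / 12 * c) *\<^sub>C v else 0)) \<and>
     \<comment> \<open>omega has weight 2\<close>
     om \<in> wt_space Y om 2 \<and>
     \<comment> \<open>L(-1)-derivative property: Y(L(-1)v,x) = d/dx Y(v,x)\<close>
     (\<forall>v n u. Y (Lop Y om (-1) v) n u = (- of_int n) *\<^sub>C Y v (n - 1) u)"

definition weak_module ::
  "('v::complex_vector \<Rightarrow> int \<Rightarrow> 'v \<Rightarrow> 'v) \<Rightarrow> 'v \<Rightarrow> ('v \<Rightarrow> int \<Rightarrow> 'w::complex_vector \<Rightarrow> 'w) \<Rightarrow> bool" where
  "weak_module Y vac YW \<longleftrightarrow>
     (\<forall>v n. clin (YW v n)) \<and> (\<forall>n w. clin (\<lambda>v. YW v n w)) \<and>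
     (\<forall>v w. \<exists>N. \<forall>n\<ge>N. YW v n w = 0) \<and>
     (\<forall>n w. YW vac n w = (if n = -1 then w else 0)) \<and>
     jacobi Y YW"

text \<open>Quasi-intertwining operator of type (W3 / W1 W2): I w1 n w2 = (w1)_n w2, n complex.\<close>
definition quasi_intertwining ::
  "'v \<Rightarrow> ('v \<Rightarrow> int \<Rightarrow> 'w1 \<Rightarrow> 'w1) \<Rightarrow> ('v \<Rightarrow> int \<Rightarrow> 'w2 \<Rightarrow> 'w2) \<Rightarrow> ('v \<Rightarrow> int \<Rightarrow> 'w3 \<Rightarrow> 'w3)
   \<Rightarrow> ('w1::complex_vector \<Rightarrow> complex \<Rightarrow> 'w2::complex_vector \<Rightarrow> 'w3::complex_vector) \<Rightarrow> bool" where
  "quasi_intertwining om Y1 Y2 Y3 I \<longleftrightarrow>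
     (\<forall>w1 n. clin (I w1 n)) \<and> (\<forall>n w2. clin (\<lambda>w1. I w1 n w2)) \<and>
     (\<forall>w1 w2. \<exists>R::real. \<forall>n. Re n > R \<longrightarrow> I w1 n w2 = 0) \<and>
     \<comment> \<open>commutator formula, coefficient of x1^(-m-1) x2^(-n-1)\<close>
     (\<forall>v w1 w2 (m::int) (n::complex).
        Y3 v m (I w1 n w2) - I w1 n (Y2 v m w2)
        = Sum_any (\<lambda>i::nat. (of_int m gchoose i) *\<^sub>C
              I (Y1 v (int i) w1) (of_int m + n - of_nat i) w2)) \<and>
     \<comment> \<open>L(-1)-derivative property, L(-1) = omega_0 on W1\<close>
     (\<forall>w1 n w2. I (Y1 om 0 w1) n w2 = (- n) *\<^sub>C I w1 (n - 1) w2)"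

definition in_H ::
  "'v \<Rightarrow> ('v \<Rightarrow> int \<Rightarrow> 'w2 \<Rightarrow> 'w2) \<Rightarrow> ('v \<Rightarrow> int \<Rightarrow> 'w3 \<Rightarrow> 'w3)
   \<Rightarrow> (complex \<Rightarrow> 'w2::complex_vector \<Rightarrow> 'w3::complex_vector) \<Rightarrow> bool" where
  "in_H om Y2 Y3 phi \<longleftrightarrow>
     (\<forall>n. clin (phi n)) \<and>
     (\<forall>w2. \<exists>R::real. \<forall>n. Re n > R \<longrightarrow> phi n w2 = 0) \<and>
     \<comment> \<open>[L(-1), phi(x)] = d/dx phi(x)\<close>
     (\<forall>n w2. Y3 om 0 (phi n w2) - phi n (Y2 om 0 w2) = (- n) *\<^sub>C phi (n - 1) w2) \<and>
     \<comment> \<open>(x1-x2)^k (Y3(v,x1) phi(x2) - phi(x2) Y2(v,x1)) = 0, coefficientwise\<close>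
     (\<forall>v. \<exists>k::nat. \<forall>(m::int) (n::complex) w2.
        (\<Sum>j\<le>k. ((-1)^j * of_nat (k choose j)) *\<^sub>C
            (Y3 v (m + int k - int j) (phi (n + of_nat j) w2)
             - phi (n + of_nat j) (Y2 v (m + int k - int j) w2))) = 0)"

text \<open>Y_H(v,x0) phi(x) = sum_n v_n phi(x) x0^(-n-1):
  Res_x1 (x0^-1 delta((x1-x)/x0) Y3(v,x1) phi(x) - x0^-1 delta((x-x1)/(-x0)) phi(x) Y2(v,x1)).
  Coefficient of x^(-p-1) of v_n phi(x), applied to w2.\<close>
definition YH ::
  "('v \<Rightarrow> int \<Rightarrow> 'w2 \<Rightarrow> 'w2) \<Rightarrow> ('v \<Rightarrow> int \<Rightarrow> 'w3 \<Rightarrow> 'w3) \<Rightarrow> 'v \<Rightarrow> int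
   \<Rightarrow> (complex \<Rightarrow> 'w2::complex_vector \<Rightarrow> 'w3::complex_vector) \<Rightarrow> complex \<Rightarrow> 'w2 \<Rightarrow> 'w3" where
  "YH Y2 Y3 v n phi p w2 =
     Sum_any (\<lambda>j::nat. ((-1)^j * (of_int n gchoose j)) *\<^sub>C Y3 v (n - int j) (phi (p + of_nat j) w2))
   - Sum_any (\<lambda>j::nat. ((-1)^(nat \<bar>n - int j\<bar>) * (of_int n gchoose j)) *\<^sub>C
        phi (p + of_int n - of_nat j) (Y2 v (int j) w2))"

end

theory Submission
  imports Defs
begin

(* By the commutator formula, a weighted sum over j of the brackets of v_(m-j) with (w1)_(p+j)
   only involves the modes (v_i w1)_(m+p-i), because the total degree m+p-i does not depend on j;
   the coefficient of (v_i w1)_(m+p-i) is sum_j a_j binom(m-j, i).  For a_j = (-1)^j binom(k,j)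
   this is a k-th backward difference of a polynomial of degree i in m: it vanishes for i < k, and
   for m = k it equals [i = k].  Taking k beyond the truncation order of v on w1 gives the locality
   condition of H(W2,W3); taking m = k = n >= 0, the weighted sum is the coefficient form of
   v_n Y(w1,x) and the right-hand side collapses to Y(v_n w1,x). *)

lemma scaleC_zero_right [simp]: "a *\<^sub>C (0::'a::complex_vector) = 0"
  by (metis add_cancel_right_right scaleC_add_right)

lemma scaleC_zero_left [simp]: "(0::complex) *\<^sub>C (x::'a::complex_vector) = 0"
  by (metis add_cancel_right_right add_0 scaleC_add_left)

lemma scaleC_diff_right: "a *\<^sub>C ((x::'a::complex_vector) - y) = a *\<^sub>C x - a *\<^sub>C y"
  by (metis add_diff_cancel diff_add_cancel scaleC_add_right)

lemma scaleC_sum_right: "a *\<^sub>C (\<Sum>i\<in>A. f i) = (\<Sum>i\<in>A. a *\<^sub>C (f i::'a::complex_vector))"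
  by (induction A rule: infinite_finite_induct) (simp_all add: scaleC_add_right)

lemma scaleC_sum_left: "(\<Sum>i\<in>A. f i) *\<^sub>C (x::'a::complex_vector) = (\<Sum>i\<in>A. f i *\<^sub>C x)"
  by (induction A rule: infinite_finite_induct) (simp_all add: scaleC_add_left)

lemma clin_zero: "clin f \<Longrightarrow> f 0 = 0"
  unfolding clin_def by (metis add_cancel_right_right add_0)

lemma Sum_any_eq_sum_lessThan:
  fixes K :: nat
  assumes "\<And>i. K \<le> i \<Longrightarrow> g i = 0"
  shows "Sum_any g = (\<Sum>i<K. g i)"
proof (rule Sum_any.expand_superset)
  show "{i. g i \<noteq> 0} \<subseteq> {..<K}"
    using assms leI by blast
qed simp

definition backward_difference :: "nat \<Rightarrow> ('a::comm_ring_1 \<Rightarrow> 'a) \<Rightarrow> 'a \<Rightarrow> 'a" where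
  "backward_difference k f x = (\<Sum>j\<le>k. (-1)^j * of_nat (k choose j) * f (x - of_nat j))"

lemma backward_difference_Suc:
  "backward_difference (Suc k) f x = backward_difference k f x - backward_difference k f (x - 1)"
proof -
  let ?t = "\<lambda>c j. (-1)^j * of_nat c * f (x - of_nat j)"
  have "backward_difference (Suc k) f x
      = f x + (\<Sum>j\<le>k. ?t (k choose Suc j) (Suc j)) + (\<Sum>j\<le>k. ?t (k choose j) (Suc j))"
    unfolding backward_difference_def sum.atMost_Suc_shift
    by (simp add: sum.distrib[symmetric] algebra_simps)
  also have "f x + (\<Sum>j\<le>k. ?t (k choose Suc j) (Suc j)) = (\<Sum>j\<le>Suc k. ?t (k choose j) j)"
    by (simp only: sum.atMost_Suc_shift) simp
  also have "\<dots> = backward_difference k f x"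
    unfolding backward_difference_def by (simp add: binomial_eq_0)
  also have "(\<Sum>j\<le>k. ?t (k choose j) (Suc j)) = - backward_difference k f (x - 1)"
    unfolding backward_difference_def by (simp add: sum_negf[symmetric] algebra_simps)
  finally show ?thesis by simp
qed

lemma backward_difference_diff:
  "backward_difference k f x - backward_difference k g x = backward_difference k (\<lambda>y. f y - g y) x"
  unfolding backward_difference_def by (simp add: sum_subtractf[symmetric] algebra_simps)

lemma backward_difference_shift:
  "backward_difference k (\<lambda>y. f (y - 1)) x = backward_difference k f (x - 1)"
  unfolding backward_difference_def by (simp add: algebra_simps)

lemma backward_difference_const: "0 < k \<Longrightarrow> backward_difference k (\<lambda>_. c) x = 0"
  unfolding backward_difference_def
  by (simp add: sum_distrib_right[symmetric] choose_alternating_sum)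

lemma backward_difference_gchoose:
  fixes x :: "'a::field_char_0"
  shows "i < k \<Longrightarrow> backward_difference k (\<lambda>y. y gchoose i) x = 0"
proof (induction k arbitrary: i x)
  case 0
  then show ?case by simp
next
  case (Suc k)
  show ?case
  proof (cases i)
    case 0
    then show ?thesis by (simp add: backward_difference_const)
  next
    case (Suc i')
    have pascal: "(y gchoose Suc i') - ((y - 1) gchoose Suc i') = (y - 1) gchoose i'" for y :: 'a
      using gbinomial_Suc_Suc[of "y - 1" i'] by simp
    have "backward_difference (Suc k) (\<lambda>y. y gchoose i) x
        = backward_difference k (\<lambda>y. (y gchoose i) - ((y - 1) gchoose i)) x"
      by (simp only: backward_difference_Suc backward_difference_shift[symmetric] backward_difference_diff)
    also have "\<dots> = backward_difference k (\<lambda>y. (y - 1) gchoose i') x"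
      by (simp only: Suc pascal)
    also have "\<dots> = backward_difference k (\<lambda>y. y gchoose i') (x - 1)"
      by (rule backward_difference_shift)
    also have "\<dots> = 0"
      using Suc.IH Suc.prems \<open>i = Suc i'\<close> by simp
    finally show ?thesis .
  qed
qed

lemma backward_difference_gchoose_of_nat:
  "backward_difference N (\<lambda>y. y gchoose i) (of_nat N :: 'a::field_char_0) = (if i = N then 1 else 0)"
proof (cases "i < N")
  case True
  then show ?thesis by (simp add: backward_difference_gchoose)
next
  case False
  have "(of_nat N - of_nat (Suc j) gchoose i) = (0::'a)" if "j < N" for j
  proof -
    have "of_nat N - of_nat (Suc j) = (of_nat (N - Suc j) :: 'a)"
      using that by (simp add: of_nat_diff)
    then have "(of_nat N - of_nat (Suc j) gchoose i) = (of_nat ((N - Suc j) choose i) :: 'a)"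
      by (simp only: binomial_gbinomial)
    then show ?thesis
      using that False by (simp add: binomial_eq_0)
  qed
  then show ?thesis
    using False unfolding backward_difference_def sum.atMost_shift
    by (simp add: binomial_gbinomial[symmetric] binomial_eq_0)
qed

lemma weak_module_truncation_nat:
  assumes "weak_module Y vac YW"
  obtains K where "\<forall>i\<ge>K. YW v (int i) w = 0"
proof -
  obtain N where "\<forall>n\<ge>N. YW v n w = 0"
    using assms unfolding weak_module_def by blast
  then have "\<forall>i\<ge>nat N. YW v (int i) w = 0" by simp
  then show ?thesis by (rule that)
qed

lemma quasi_intertwining_commutator_finite:
  assumes QI: "quasi_intertwining om Y1 Y2 Y3 I"
    and trunc: "\<forall>i\<ge>K. Y1 v (int i) w1 = 0"
  shows "Y3 v m (I w1 n w2) - I w1 n (Y2 v m w2)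
       = (\<Sum>i<K. (of_int m gchoose i) *\<^sub>C I (Y1 v (int i) w1) (of_int m + n - of_nat i) w2)"
proof -
  have "I 0 p w2 = 0" for p
    using QI clin_zero unfolding quasi_intertwining_def by blast
  then show ?thesis
    using QI trunc unfolding quasi_intertwining_def by (simp add: Sum_any_eq_sum_lessThan)
qed

lemma quasi_intertwining_commutator_sum:
  assumes QI: "quasi_intertwining om Y1 Y2 Y3 I"
    and trunc: "\<forall>i\<ge>K. Y1 v (int i) w1 = 0"
  shows "(\<Sum>j\<le>k. a j *\<^sub>C
            (Y3 v (m - int j) (I w1 (n + of_nat j) w2) - I w1 (n + of_nat j) (Y2 v (m - int j) w2)))
       = (\<Sum>i<K. (\<Sum>j\<le>k. a j * (of_int (m - int j) gchoose i)) *\<^sub>C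
            I (Y1 v (int i) w1) (of_int m + n - of_nat i) w2)"
proof -
  have "of_int (m - int j) + (n + of_nat j) - of_nat i = of_int m + n - of_nat i" for i j
    by simp
  then have "(\<Sum>j\<le>k. a j *\<^sub>C
            (Y3 v (m - int j) (I w1 (n + of_nat j) w2) - I w1 (n + of_nat j) (Y2 v (m - int j) w2)))
      = (\<Sum>j\<le>k. a j *\<^sub>C (\<Sum>i<K. (of_int (m - int j) gchoose i) *\<^sub>C
            I (Y1 v (int i) w1) (of_int m + n - of_nat i) w2))"
    by (simp add: quasi_intertwining_commutator_finite[OF QI trunc])
  also have "\<dots> = (\<Sum>i<K. (\<Sum>j\<le>k. a j * (of_int (m - int j) gchoose i)) *\<^sub>C
            I (Y1 v (int i) w1) (of_int m + n - of_nat i) w2)"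
    by (simp add: scaleC_sum_right scaleC_sum_left scaleC_scaleC sum.swap[of _ "{..k}"])
  finally show ?thesis .
qed

lemma quasi_intertwining_L_minus_one_bracket:
  assumes "quasi_intertwining om Y1 Y2 Y3 I"
  shows "Y3 om 0 (I w1 n w2) - I w1 n (Y2 om 0 w2) = (- n) *\<^sub>C I w1 (n - 1) w2"
proof -
  have only_mode_zero:
    "(\<lambda>i. (of_int 0 gchoose i) *\<^sub>C I (Y1 om (int i) w1) (of_int 0 + n - of_nat i) w2)
      = (\<lambda>i. if i = 0 then I (Y1 om 0 w1) n w2 else 0)"
    by (simp add: fun_eq_iff gbinomial_0_left scaleC_one)
  have "Y3 om 0 (I w1 n w2) - I w1 n (Y2 om 0 w2)
      = Sum_any (\<lambda>i. (of_int 0 gchoose i) *\<^sub>C I (Y1 om (int i) w1) (of_int 0 + n - of_nat i) w2)"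
    using assms unfolding quasi_intertwining_def by blast
  also have "\<dots> = I (Y1 om 0 w1) n w2"
    unfolding only_mode_zero by simp
  also have "\<dots> = (- n) *\<^sub>C I w1 (n - 1) w2"
    using assms unfolding quasi_intertwining_def by blast
  finally show ?thesis .
qed

lemma quasi_intertwining_locality:
  assumes QI: "quasi_intertwining om Y1 Y2 Y3 I"
    and trunc: "\<forall>i\<ge>k. Y1 v (int i) w1 = 0"
  shows "(\<Sum>j\<le>k. ((-1)^j * of_nat (k choose j)) *\<^sub>C
            (Y3 v (m + int k - int j) (I w1 (n + of_nat j) w2)
             - I w1 (n + of_nat j) (Y2 v (m + int k - int j) w2))) = 0"
proof -
  have "(\<Sum>j\<le>k. (-1)^j * of_nat (k choose j) * (of_int (m + int k - int j) gchoose i)) = (0::complex)"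
    if "i < k" for i
    using backward_difference_gchoose[OF that, of "of_int m + of_nat k"]
    unfolding backward_difference_def by simp
  then show ?thesis
    by (simp add: quasi_intertwining_commutator_sum[OF QI trunc])
qed

lemma quasi_intertwining_in_H:
  assumes QI: "quasi_intertwining om Y1 Y2 Y3 I" and "weak_module Y vac Y1"
  shows "in_H om Y2 Y3 (I w1)"
  unfolding in_H_def
proof (intro conjI allI)
  fix v
  obtain k where "\<forall>i\<ge>k. Y1 v (int i) w1 = 0"
    using weak_module_truncation_nat[OF \<open>weak_module Y vac Y1\<close>] .
  then show "\<exists>k. \<forall>m n w2. (\<Sum>j\<le>k. ((-1)^j * of_nat (k choose j)) *\<^sub>C
            (Y3 v (m + int k - int j) (I w1 (n + of_nat j) w2)
             - I w1 (n + of_nat j) (Y2 v (m + int k - int j) w2))) = 0"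
    using quasi_intertwining_locality[OF QI] by blast
qed (use QI quasi_intertwining_L_minus_one_bracket[OF QI] in \<open>auto simp: quasi_intertwining_def\<close>)

lemma YH_of_nat:
  "YH Y2 Y3 v (int N) phi p w2
     = (\<Sum>j\<le>N. ((-1)^j * of_nat (N choose j)) *\<^sub>C
          (Y3 v (int N - int j) (phi (p + of_nat j) w2) - phi (p + of_nat j) (Y2 v (int N - int j) w2)))"
proof -
  have Y3_part:
    "Sum_any (\<lambda>j. ((-1)^j * (of_int (int N) gchoose j)) *\<^sub>C Y3 v (int N - int j) (phi (p + of_nat j) w2))
      = (\<Sum>j\<le>N. ((-1)^j * of_nat (N choose j)) *\<^sub>C Y3 v (int N - int j) (phi (p + of_nat j) w2))"
    by (simp add: Sum_any_eq_sum_lessThan[of "Suc N"] lessThan_Suc_atMost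
        binomial_gbinomial[symmetric] binomial_eq_0)
  have "Sum_any (\<lambda>j. ((-1)^(nat \<bar>int N - int j\<bar>) * (of_int (int N) gchoose j)) *\<^sub>C
          phi (p + of_int (int N) - of_nat j) (Y2 v (int j) w2))
      = (\<Sum>j\<le>N. ((-1)^(nat \<bar>int N - int j\<bar>) * of_nat (N choose j)) *\<^sub>C
          phi (p + of_nat N - of_nat j) (Y2 v (int j) w2))"
    by (simp add: Sum_any_eq_sum_lessThan[of "Suc N"] lessThan_Suc_atMost
        binomial_gbinomial[symmetric] binomial_eq_0)
  also have "\<dots> = (\<Sum>j\<le>N. ((-1)^j * of_nat (N choose j)) *\<^sub>C
          phi (p + of_nat j) (Y2 v (int N - int j) w2))"
  proof (rule sum.reindex_bij_witness[where i = "\<lambda>j. N - j" and j = "\<lambda>j. N - j"])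
    fix j assume "j \<in> {..N}"
    then have "j \<le> N" by simp
    then have "nat \<bar>int N - int j\<bar> = N - j" and "int N - int (N - j) = int j"
      by simp_all
    moreover have "N choose (N - j) = N choose j"
      using \<open>j \<le> N\<close> by (rule binomial_symmetric[symmetric])
    moreover have "p + of_nat (N - j) = p + of_nat N - (of_nat j :: complex)"
      using \<open>j \<le> N\<close> by (simp add: of_nat_diff)
    ultimately show "((-1)^(N - j) * of_nat (N choose (N - j))) *\<^sub>C
          phi (p + of_nat (N - j)) (Y2 v (int N - int (N - j)) w2)
      = ((-1)^(nat \<bar>int N - int j\<bar>) * of_nat (N choose j)) *\<^sub>C
          phi (p + of_nat N - of_nat j) (Y2 v (int j) w2)"
      by (simp add: add_diff_eq)
  qed auto
  finally show ?thesis
    unfolding YH_def Y3_part by (simp add: scaleC_diff_right sum_subtractf)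
qed

lemma quasi_intertwining_YH:
  assumes QI: "quasi_intertwining om Y1 Y2 Y3 I" and "weak_module Y vac Y1"
  shows "I (Y1 v (int N) w1) = YH Y2 Y3 v (int N) (I w1)"
proof (intro ext)
  fix p w2
  obtain K where "\<forall>i\<ge>K. Y1 v (int i) w1 = 0"
    using weak_module_truncation_nat[OF \<open>weak_module Y vac Y1\<close>] .
  then have trunc: "\<forall>i\<ge>max K (Suc N). Y1 v (int i) w1 = 0" by simp
  have "(\<Sum>j\<le>N. (-1)^j * of_nat (N choose j) * (of_int (int N - int j) gchoose i))
      = (if i = N then 1 else (0::complex))" for i
    using backward_difference_gchoose_of_nat[of N i] unfolding backward_difference_def by simp
  then have "YH Y2 Y3 v (int N) (I w1) p w2
      = (\<Sum>i<max K (Suc N). (if i = N then 1 else 0) *\<^sub>C I (Y1 v (int i) w1) (of_nat N + p - of_nat i) w2)"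
    by (simp add: YH_of_nat quasi_intertwining_commutator_sum[OF QI trunc])
  also have "\<dots> = I (Y1 v (int N) w1) p w2"
    by (simp add: scaleC_one if_distrib[of "\<lambda>c. c *\<^sub>C _"] sum.delta less_max_iff_disj cong: if_cong)
  finally show "I (Y1 v (int N) w1) p w2 = YH Y2 Y3 v (int N) (I w1) p w2" by simp
qed

theorem mainTheorem13:
  fixes Y :: "'v::complex_vector \<Rightarrow> int \<Rightarrow> 'v \<Rightarrow> 'v" and vac om :: 'v and c :: complex
    and Y1 :: "'v \<Rightarrow> int \<Rightarrow> 'w1::complex_vector \<Rightarrow> 'w1"
    and Y2 :: "'v \<Rightarrow> int \<Rightarrow> 'w2::complex_vector \<Rightarrow> 'w2"
    and Y3 :: "'v \<Rightarrow> int \<Rightarrow> 'w3::complex_vector \<Rightarrow> 'w3"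
    and I :: "'w1 \<Rightarrow> complex \<Rightarrow> 'w2 \<Rightarrow> 'w3"
  assumes "is_VOA Y vac om c"
    and "weak_module Y vac Y1" and "weak_module Y vac Y2" and "weak_module Y vac Y3"
    and "quasi_intertwining om Y1 Y2 Y3 I"
  shows "(\<forall>w1. in_H om Y2 Y3 (I w1))
       \<and> (\<forall>a w w' p w2. I (a *\<^sub>C w + w') p w2 = a *\<^sub>C I w p w2 + I w' p w2)
       \<and> (\<forall>v (n::int) w1. n \<ge> 0 \<longrightarrow> I (Y1 v n w1) = YH Y2 Y3 v n (I w1))"
proof -
  note QI = \<open>quasi_intertwining om Y1 Y2 Y3 I\<close> and W1 = \<open>weak_module Y vac Y1\<close>
  have "in_H om Y2 Y3 (I w1)" for w1
    by (rule quasi_intertwining_in_H[OF QI W1])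
  moreover have "I (a *\<^sub>C w + w') p w2 = a *\<^sub>C I w p w2 + I w' p w2" for a w w' p w2
    using QI unfolding quasi_intertwining_def clin_def by simp
  moreover have "I (Y1 v n w1) = YH Y2 Y3 v n (I w1)" if "n \<ge> 0" for v n w1
    using quasi_intertwining_YH[OF QI W1, of v "nat n"] that by simp
  ultimately show ?thesis by blast
qed

end
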